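(* Let $B\subset\mathbb R^2$ be a closed Euclidean ball of positive radius, and let $T\subset\mathbb R^2$ be a closed non-degenerate (filled) triangle. Then $S(B)=S(T)=\{(0,0)\}$. Consequently, neither $B$ nor $T$ is the achievement set $E(v_n)$ of any sequence $(v_n)$ in $\mathbb R^2$ with $\sum_n v_n$ absolutely convergent.
   Context: For an absolutely convergent series $\sum_n v_n$ in $\mathbb R^2$, its achievement set is $E(v_n)=\{\sum_{n=1}^\infty \varepsilon_n v_n : (\varepsilon_n)\in\{0,1\}^{\mathbb N}\}$. For $A\subset\mathbb R^2$, the spectre of $A$ is $S(A)=\{x\in \mathbb R^2:\ \forall y\in A,\ y+x\in A\text{ or }y-x\in A\}$. *)

theory Defs
  imports "HOL-Analysis.Analysis"
begin

definition achievement_set :: "(nat \<Rightarrow> real^2) \<Rightarrow> (real^2) set" where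
  "achievement_set v = {(\<Sum>n. eps n *\<^sub>R v n) | eps. \<forall>n. eps n \<in> {0::real, 1}}"

definition spectre :: "(real^2) set \<Rightarrow> (real^2) set" where
  "spectre A = {x. \<forall>y\<in>A. y + x \<in> A \<or> y - x \<in> A}"

end

theory Submission
  imports Defs
begin

text \<open>
  If \<open>x \<noteq> 0\<close> lies in the spectre of a closed ball, translate the boundary point
  \<open>c - w\<close>, where \<open>w\<close> is orthogonal to \<open>x\<close>, by \<open>x\<close> and by \<open>-x\<close>: by Pythagoras both
  translates leave the ball. For a triangle with vertices \<open>a, b, d\<close>, write
  \<open>x = p(b - a) + q(d - a)\<close>; the spectre condition at a vertex forces the two coordinates of
  \<open>x\<close> relative to that vertex to have the same sign, and at the three vertices these
  coordinate pairs are \<open>(p, q)\<close>, \<open>(-p-q, q)\<close> and \<open>(p, -p-q)\<close>, which forces \<open>p = q = 0\<close>.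
  Finally every term \<open>v n\<close> of an absolutely convergent series lies in the spectre of its
  achievement set (flip the \<open>n\<close>-th coefficient), so an achievement set with trivial spectre
  is \<open>{0}\<close>, which neither a ball nor a triangle is.
\<close>

lemma collinear_if_scaleR_combination_eq_zero:
  fixes x y :: "'a::real_vector"
  assumes "u *\<^sub>R x + v *\<^sub>R y = 0" and "u \<noteq> 0"
  shows "collinear {0, x, y}"
proof -
  have "u *\<^sub>R x = (- v) *\<^sub>R y"
    using assms(1) by (simp add: eq_neg_iff_add_eq_0)
  then have "x = (- v / u) *\<^sub>R y"
    using assms(2) by (metis vector_fraction_eq_iff)
  then have "collinear {0, y, x}"
    using collinear_lemma[of y x] by blast
  then show ?thesis by (simp add: insert_commute)
qed

lemma not_collinear_coords_eq_zero:
  fixes a b d :: "'a::real_vector"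
  assumes "\<not> collinear {a, b, d}" and "u *\<^sub>R (b - a) + v *\<^sub>R (d - a) = 0"
  shows "u = 0 \<and> v = 0"
proof -
  have "\<not> collinear {0, b - a, d - a}"
    using assms(1) collinear_3[of b a d] by (simp add: insert_commute)
  then show ?thesis
    using collinear_if_scaleR_combination_eq_zero[of u "b - a" v "d - a"]
      collinear_if_scaleR_combination_eq_zero[of v "d - a" u "b - a"] assms(2)
    by (auto simp: add.commute insert_commute)
qed

lemma not_collinear_coords_unique:
  fixes a b d :: "'a::real_vector"
  assumes "\<not> collinear {a, b, d}"
    and "u *\<^sub>R (b - a) + v *\<^sub>R (d - a) = u' *\<^sub>R (b - a) + v' *\<^sub>R (d - a)"
  shows "u = u' \<and> v = v'"
  using not_collinear_coords_eq_zero[OF assms(1), of "u - u'" "v - v'"] assms(2)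
  by (simp add: algebra_simps)

lemma spectre_triangle_vertex:
  fixes a b d x :: "real^2"
  assumes "x \<in> spectre (convex hull {a, b, d})"
  obtains u v where "x = u *\<^sub>R (b - a) + v *\<^sub>R (d - a)"
    and "0 \<le> u \<and> 0 \<le> v \<or> u \<le> 0 \<and> v \<le> 0"
proof -
  have "a \<in> convex hull {a, b, d}" by (simp add: hull_inc)
  with assms have "a + x \<in> convex hull {a, b, d} \<or> a - x \<in> convex hull {a, b, d}"
    unfolding spectre_def by blast
  then show thesis
  proof
    assume "a + x \<in> convex hull {a, b, d}"
    then obtain u v where "0 \<le> u" "0 \<le> v" "a + x = a + u *\<^sub>R (b - a) + v *\<^sub>R (d - a)"
      unfolding convex_hull_3_alt by blast
    then show thesis using that[of u v] by simp
  next
    assume "a - x \<in> convex hull {a, b, d}"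
    then obtain u v where "0 \<le> u" "0 \<le> v" "a - x = a + u *\<^sub>R (b - a) + v *\<^sub>R (d - a)"
      unfolding convex_hull_3_alt by blast
    then show thesis using that[of "- u" "- v"] by (simp add: algebra_simps)
  qed
qed

lemma spectre_triangle:
  fixes a b d :: "real^2"
  assumes nc: "\<not> collinear {a, b, d}"
  shows "spectre (convex hull {a, b, d}) = {0}"
proof
  show "{0} \<subseteq> spectre (convex hull {a, b, d})" by (simp add: spectre_def)
  show "spectre (convex hull {a, b, d}) \<subseteq> {0}"
  proof
    fix x assume x: "x \<in> spectre (convex hull {a, b, d})"
    obtain p q where pq: "x = p *\<^sub>R (b - a) + q *\<^sub>R (d - a)"
      and sign_a: "0 \<le> p \<and> 0 \<le> q \<or> p \<le> 0 \<and> q \<le> 0"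
      using spectre_triangle_vertex[OF x] .
    obtain p' q' where pq': "x = p' *\<^sub>R (a - b) + q' *\<^sub>R (d - b)"
      and sign_b: "0 \<le> p' \<and> 0 \<le> q' \<or> p' \<le> 0 \<and> q' \<le> 0"
      by (rule spectre_triangle_vertex[of x b a d]) (use x in \<open>simp_all add: insert_commute\<close>)
    obtain p'' q'' where pq'': "x = p'' *\<^sub>R (a - d) + q'' *\<^sub>R (b - d)"
      and sign_d: "0 \<le> p'' \<and> 0 \<le> q'' \<or> p'' \<le> 0 \<and> q'' \<le> 0"
      by (rule spectre_triangle_vertex[of x d a b]) (use x in \<open>simp_all add: insert_commute\<close>)
    have "x = (- p' - q') *\<^sub>R (b - a) + q' *\<^sub>R (d - a)"
      using pq' by (simp add: algebra_simps)
    with pq nc have coords_b: "p = - p' - q' \<and> q = q'"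
      using not_collinear_coords_unique by blast
    have "x = q'' *\<^sub>R (b - a) + (- p'' - q'') *\<^sub>R (d - a)"
      using pq'' by (simp add: algebra_simps)
    with pq nc have coords_d: "p = q'' \<and> q = - p'' - q''"
      using not_collinear_coords_unique by blast
    from sign_a sign_b sign_d coords_b coords_d have "p = 0 \<and> q = 0" by linarith
    with pq show "x \<in> {0}" by simp
  qed
qed

lemma orthogonal_vector_of_norm_exists:
  fixes x :: "'a::euclidean_space"
  assumes "2 \<le> DIM('a)" and "0 \<le> r"
  obtains w where "norm w = r" and "orthogonal w x"
proof -
  obtain y where "y \<noteq> 0" "orthogonal x y"
    using orthogonal_to_vector_exists[OF assms(1)] .
  then show thesis
    using that[of "(r / norm y) *\<^sub>R y"] assms(2)
    by (simp add: orthogonal_commute orthogonal_clauses)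
qed

lemma norm_less_norm_add_orthogonal:
  fixes w x :: "'a::real_inner"
  assumes "orthogonal w x" and "x \<noteq> 0"
  shows "norm w < norm (w + x)"
proof -
  have "(norm w)\<^sup>2 < (norm (w + x))\<^sup>2"
    using norm_add_Pythagorean[OF assms(1)] assms(2) by simp
  then show ?thesis by (simp add: power_less_imp_less_base)
qed

lemma spectre_cball:
  fixes c :: "real^2"
  assumes "0 < r"
  shows "spectre (cball c r) = {0}"
proof
  show "{0} \<subseteq> spectre (cball c r)" by (simp add: spectre_def)
  show "spectre (cball c r) \<subseteq> {0}"
  proof
    fix x assume x: "x \<in> spectre (cball c r)"
    show "x \<in> {0}"
    proof (rule ccontr)
      assume "x \<notin> {0}"
      then have "x \<noteq> 0" by simp
      obtain w where w: "norm w = r" "orthogonal w x"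
        using orthogonal_vector_of_norm_exists[of r x] assms by auto
      have "c - w \<in> cball c r" using w(1) by simp
      with x have "c - w + x \<in> cball c r \<or> c - w - x \<in> cball c r"
        unfolding spectre_def by blast
      moreover have "c - w + x = c - (w - x)" "c - w - x = c - (w + x)"
        by (simp_all add: algebra_simps)
      ultimately have "norm (w - x) \<le> r \<or> norm (w + x) \<le> r"
        by (simp only: mem_cball dist_diff)
      moreover have "r < norm (w + x)" "r < norm (w - x)"
        using norm_less_norm_add_orthogonal[of w x] norm_less_norm_add_orthogonal[of w "- x"]
          w \<open>x \<noteq> 0\<close> by (auto simp: orthogonal_clauses)
      ultimately show False by linarith
    qed
  qed
qed

lemma summable_scaleR_zero_one:
  fixes v :: "nat \<Rightarrow> 'a::banach"
  assumes "summable (\<lambda>n. norm (v n))" and "\<forall>n. eps n \<in> {0::real, 1}"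
  shows "summable (\<lambda>n. eps n *\<^sub>R v n)"
proof (rule summable_comparison_test'[OF assms(1)])
  fix n show "norm (eps n *\<^sub>R v n) \<le> norm (v n)"
    using assms(2) by (cases "eps n = 0") auto
qed

lemma summand_in_spectre_achievement_set:
  fixes v :: "nat \<Rightarrow> real^2"
  assumes "summable (\<lambda>n. norm (v n))"
  shows "v n \<in> spectre (achievement_set v)"
  unfolding spectre_def
proof (intro CollectI ballI)
  fix y assume "y \<in> achievement_set v"
  then obtain eps where y: "y = (\<Sum>k. eps k *\<^sub>R v k)" and eps: "\<forall>k. eps k \<in> {0::real, 1}"
    unfolding achievement_set_def by blast
  define eps' where "eps' = eps(n := 1 - eps n)"
  have "(\<lambda>k. eps k *\<^sub>R v k + (if k = n then (1 - 2 * eps n) *\<^sub>R v k else 0)) sums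
      (y + (1 - 2 * eps n) *\<^sub>R v n)"
    using summable_scaleR_zero_one[OF assms eps] y
    by (intro sums_add sums_single) (simp add: summable_sums)
  moreover have "(\<lambda>k. eps k *\<^sub>R v k + (if k = n then (1 - 2 * eps n) *\<^sub>R v k else 0))
      = (\<lambda>k. eps' k *\<^sub>R v k)"
    by (rule ext) (simp add: eps'_def flip: scaleR_left_distrib)
  ultimately have "y + (1 - 2 * eps n) *\<^sub>R v n = (\<Sum>k. eps' k *\<^sub>R v k)"
    by (simp add: sums_iff)
  moreover have "\<forall>k. eps' k \<in> {0, 1}" using eps by (auto simp: eps'_def)
  ultimately have "y + (1 - 2 * eps n) *\<^sub>R v n \<in> achievement_set v"
    unfolding achievement_set_def by blast
  then show "y + v n \<in> achievement_set v \<or> y - v n \<in> achievement_set v"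
    using eps[rule_format, of n] by auto
qed

lemma zero_in_achievement_set: "0 \<in> achievement_set v"
  unfolding achievement_set_def by (intro CollectI exI[of _ "\<lambda>_. 0"]) simp

lemma achievement_set_eq_zero_if_spectre_eq_zero:
  fixes v :: "nat \<Rightarrow> real^2"
  assumes "summable (\<lambda>n. norm (v n))" and "spectre (achievement_set v) = {0}"
  shows "achievement_set v = {0}"
proof -
  have "v n = 0" for n
    using summand_in_spectre_achievement_set[OF assms(1), of n] assms(2) by simp
  then have "achievement_set v \<subseteq> {0}"
    unfolding achievement_set_def by auto
  with zero_in_achievement_set show ?thesis by blast
qed

theorem mainTheorem18:
  fixes c a b d :: "real^2" and r :: real
  assumes "r > 0"
    and "\<not> collinear {a, b, d}"
  shows "spectre (cball c r) = {0}
    \<and> spectre (convex hull {a, b, d}) = {0}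
    \<and> (\<forall>v :: nat \<Rightarrow> real^2. summable (\<lambda>n. norm (v n)) \<longrightarrow>
          achievement_set v \<noteq> cball c r \<and> achievement_set v \<noteq> convex hull {a, b, d})"
proof (intro conjI allI impI)
  show ball: "spectre (cball c r) = {0}" using spectre_cball[OF assms(1)] .
  show triangle: "spectre (convex hull {a, b, d}) = {0}" using spectre_triangle[OF assms(2)] .
  fix v :: "nat \<Rightarrow> real^2" assume v: "summable (\<lambda>n. norm (v n))"
  have "cball c r \<noteq> {0}"
  proof
    assume "cball c r = {0}"
    moreover have "c \<in> cball c r" using assms(1) by simp
    ultimately have "cball c r = {c}" by simp
    with assms(1) show False by (simp add: cball_eq_sing)
  qed
  with ball show "achievement_set v \<noteq> cball c r"
    using achievement_set_eq_zero_if_spectre_eq_zero[OF v] by auto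
  have "convex hull {a, b, d} \<noteq> {0}"
  proof
    assume "convex hull {a, b, d} = {0}"
    then have "{a, b, d} \<subseteq> {0}" using hull_subset[of "{a, b, d}" convex] by simp
    with assms(2) show False by auto
  qed
  with triangle show "achievement_set v \<noteq> convex hull {a, b, d}"
    using achievement_set_eq_zero_if_spectre_eq_zero[OF v] by auto
qed

end
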